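(* Let $n\ge4$, $\mathcal G\in\mathbb G^n_S$, and let $\mathcal A(\mathcal G_{cyclic})$ be the sum of the $n$ smallest edge weights of $\mathcal G_{cyclic}$ (counted among its $\binom n2$ edges). Then every Hamiltonian circuit of $\mathcal G$ has length at least $T(\mathcal G)+\mathcal A(\mathcal G_{cyclic})$, and the shortest Hamiltonian circuit of $\mathcal G$ has length at most $T(\mathcal G)$.
   Context: $\mathbb G^n_S$ is the space of complete undirected weighted graphs without loops on $V_1,\dots,V_n$ with edge weights $d_{i,j}=d_{j,i}$, identified with $\mathbb R^{\binom n2}$ with the standard inner product. $\mathcal G_{cyclic}$ is the orthogonal projection of $\mathcal G$ onto the orthogonal complement of the subspace of graphs with $d_{j,k}=\omega_j+\omega_k$ for some reals $\omega_j$. $S_S(V_j)=\sum_{k\ne j}d_{j,k}$, $T(\mathcal G)=\frac1{n-1}\sum_jS_S(V_j)$. A Hamiltonian circuit is a closed path visiting every vertex exactly once; its length is the sum of its edge weights. *)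

theory Defs
  imports Complex_Main "HOL-Combinatorics.Permutations"
begin

text \<open>Vertices V_1..V_n are represented by 0..<n; a weighted graph by a symmetric
  function d :: nat => nat => real (only the values d i j with i \<noteq> j, i,j < n matter).\<close>

definition edges :: "nat \<Rightarrow> (nat \<times> nat) list" where
  "edges n = concat (map (\<lambda>i. map (\<lambda>j. (i, j)) [Suc i..<n]) [0..<n])"

definition ginner :: "nat \<Rightarrow> (nat \<Rightarrow> nat \<Rightarrow> real) \<Rightarrow> (nat \<Rightarrow> nat \<Rightarrow> real) \<Rightarrow> real" where
  "ginner n a b = (\<Sum>i<n. \<Sum>j\<in>{Suc i..<n}. a i j * b i j)"

text \<open>Canonical representative of an element of G^n_S: symmetric, zero off the edge set.\<close>
definition graph_rep :: "nat \<Rightarrow> (nat \<Rightarrow> nat \<Rightarrow> real) \<Rightarrow> bool" where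
  "graph_rep n c \<longleftrightarrow> (\<forall>i j. c i j = c j i) \<and> (\<forall>i j. (n \<le> i \<or> n \<le> j \<or> i = j) \<longrightarrow> c i j = 0)"

definition cut_space :: "nat \<Rightarrow> (nat \<Rightarrow> nat \<Rightarrow> real) set" where
  "cut_space n = {w. \<exists>\<omega>::nat \<Rightarrow> real. \<forall>i<n. \<forall>j<n. i \<noteq> j \<longrightarrow> w i j = \<omega> i + \<omega> j}"

text \<open>G_cyclic: orthogonal projection of d onto the orthogonal complement of cut_space,
  i.e. the unique c orthogonal to cut_space with d - c in cut_space.\<close>
definition G_cyclic :: "nat \<Rightarrow> (nat \<Rightarrow> nat \<Rightarrow> real) \<Rightarrow> (nat \<Rightarrow> nat \<Rightarrow> real)" where
  "G_cyclic n d = (THE c. graph_rep n c \<and> (\<forall>w\<in>cut_space n. ginner n c w = 0)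
                          \<and> (\<lambda>i j. d i j - c i j) \<in> cut_space n)"

definition S_S :: "nat \<Rightarrow> (nat \<Rightarrow> nat \<Rightarrow> real) \<Rightarrow> nat \<Rightarrow> real" where
  "S_S n d j = (\<Sum>k\<in>{..<n} - {j}. d j k)"

definition T_G :: "nat \<Rightarrow> (nat \<Rightarrow> nat \<Rightarrow> real) \<Rightarrow> real" where
  "T_G n d = (\<Sum>j<n. S_S n d j) / (real n - 1)"

definition A_small :: "nat \<Rightarrow> (nat \<Rightarrow> nat \<Rightarrow> real) \<Rightarrow> real" where
  "A_small n c = sum_list (take n (sort (map (\<lambda>(i, j). c i j) (edges n))))"

definition circuit_length :: "nat \<Rightarrow> (nat \<Rightarrow> nat \<Rightarrow> real) \<Rightarrow> (nat \<Rightarrow> nat) \<Rightarrow> real" where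
  "circuit_length n d p = (\<Sum>i<n. d (p i) (p (Suc i mod n)))"

definition hamiltonian_circuits :: "nat \<Rightarrow> (nat \<Rightarrow> nat) set" where
  "hamiltonian_circuits n = {p. p permutes {..<n}}"

end

theory Submission
  imports Defs "HOL-Combinatorics.List_Permutation"
begin

text \<open>Write d(j,k) = c(j,k) + \<omega>(j) + \<omega>(k) with c = G_cyclic: orthogonality of c to the cut space says
  exactly that every row sum of c vanishes. Summing rows of d then gives T(G) = 2 \<Sigma>\<omega>, and since a
  Hamiltonian circuit enters and leaves every vertex once, the potential contributes 2 \<Sigma>\<omega> = T(G)
  to every circuit. The cyclic part contributes the weights of n distinct edges of c, which are at
  least the n smallest ones. Finally, averaging c (p i) (p (i+1)) over all permutations p yields a
  multiple of a row sum of c, so the cyclic contribution has mean 0 and some circuit has length at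
  most T(G).\<close>

lemma sum_upper_triangle_swap:
  "(\<Sum>i<n. \<Sum>j\<in>{Suc i..<n}. g i j) = (\<Sum>j<n. \<Sum>i<j. g i j :: 'a :: comm_monoid_add)"
proof (induction n)
  case (Suc n)
  have "(\<Sum>i<Suc n. \<Sum>j\<in>{Suc i..<Suc n}. g i j) = (\<Sum>i<n. \<Sum>j\<in>{Suc i..<Suc n}. g i j)"
    by simp
  also have "\<dots> = (\<Sum>i<n. (\<Sum>j\<in>{Suc i..<n}. g i j) + g i n)"
    by (intro sum.cong) auto
  finally show ?case by (simp add: sum.distrib Suc)
qed simp

lemma S_S_split:
  "j < n \<Longrightarrow> S_S n d j = (\<Sum>k<j. d j k) + (\<Sum>k\<in>{Suc j..<n}. d j k)"
proof -
  assume "j < n"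
  then have "{..<n} - {j} = {..<j} \<union> {Suc j..<n}" by auto
  moreover have "{..<j} \<inter> {Suc j..<n} = {}" by auto
  ultimately show ?thesis unfolding S_S_def by (simp add: sum.union_disjoint)
qed

lemma ginner_cut_space:
  assumes sym: "\<forall>i j. c i j = c j i"
    and w: "\<forall>i<n. \<forall>j<n. i \<noteq> j \<longrightarrow> w i j = \<nu> i + \<nu> j"
  shows "ginner n c w = (\<Sum>i<n. \<nu> i * S_S n c i)"
proof -
  have "ginner n c w = (\<Sum>i<n. \<Sum>j\<in>{Suc i..<n}. \<nu> i * c i j)
                     + (\<Sum>i<n. \<Sum>j\<in>{Suc i..<n}. \<nu> j * c i j)"
    unfolding ginner_def using w by (simp add: sum.distrib[symmetric] algebra_simps)
  also have "(\<Sum>i<n. \<Sum>j\<in>{Suc i..<n}. \<nu> j * c i j) = (\<Sum>j<n. \<Sum>i<j. \<nu> j * c j i)"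
    by (simp add: sum_upper_triangle_swap sym)
  finally show ?thesis
    by (simp add: S_S_split sum_distrib_left distrib_left sum.distrib[symmetric] add.commute)
qed

lemma orthogonal_cut_space_iff:
  assumes "graph_rep n c"
  shows "(\<forall>w\<in>cut_space n. ginner n c w = 0) \<longleftrightarrow> (\<forall>j<n. S_S n c j = 0)"
proof -
  have sym: "\<forall>i j. c i j = c j i" using assms by (simp add: graph_rep_def)
  show ?thesis
  proof
    assume orth: "\<forall>w\<in>cut_space n. ginner n c w = 0"
    show "\<forall>j<n. S_S n c j = 0"
    proof (intro allI impI)
      fix j assume "j < n"
      define \<nu> where "\<nu> i = (if i = j then 1 else 0 :: real)" for i
      have "(\<lambda>i k. \<nu> i + \<nu> k) \<in> cut_space n" unfolding cut_space_def by blast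
      then have "0 = (\<Sum>i<n. \<nu> i * S_S n c i)"
        using orth ginner_cut_space[OF sym, of n "\<lambda>i k. \<nu> i + \<nu> k" \<nu>] by simp
      also have "\<dots> = S_S n c j"
        using \<open>j < n\<close> by (simp add: \<nu>_def if_distrib[where f = "\<lambda>x. x * _"] cong: if_cong)
      finally show "S_S n c j = 0" by simp
    qed
  next
    assume rows: "\<forall>j<n. S_S n c j = 0"
    show "\<forall>w\<in>cut_space n. ginner n c w = 0"
    proof
      fix w assume "w \<in> cut_space n"
      then obtain \<nu> where "\<forall>i<n. \<forall>j<n. i \<noteq> j \<longrightarrow> w i j = \<nu> i + \<nu> j"
        unfolding cut_space_def by blast
      then have "ginner n c w = (\<Sum>i<n. \<nu> i * S_S n c i)" by (rule ginner_cut_space[OF sym])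
      then show "ginner n c w = 0" using rows by simp
    qed
  qed
qed

lemma ginner_self_eq_0D:
  assumes "ginner n e e = 0" "i < j" "j < n"
  shows "e i j = 0"
proof -
  have "\<forall>i<n. \<forall>j\<in>{Suc i..<n}. e i j * e i j = 0"
    using assms(1) unfolding ginner_def
    by (subst (asm) sum_nonneg_eq_0_iff) (auto simp: sum_nonneg_eq_0_iff intro: sum_nonneg)
  then show ?thesis using assms(2,3) by simp
qed

definition cyclic_part :: "nat \<Rightarrow> (nat \<Rightarrow> nat \<Rightarrow> real) \<Rightarrow> (nat \<Rightarrow> nat \<Rightarrow> real) \<Rightarrow> bool" where
  "cyclic_part n d c \<longleftrightarrow> graph_rep n c \<and> (\<forall>w\<in>cut_space n. ginner n c w = 0)
                          \<and> (\<lambda>i j. d i j - c i j) \<in> cut_space n"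

lemma S_S_add_potential:
  assumes "\<forall>i<n. \<forall>k<n. i \<noteq> k \<longrightarrow> d i k - c i k = \<omega> i + \<omega> k" and "j < n"
  shows "S_S n d j = S_S n c j + (real n - 2) * \<omega> j + (\<Sum>k<n. \<omega> k)"
proof -
  have "S_S n d j = (\<Sum>k\<in>{..<n} - {j}. c j k + \<omega> j + \<omega> k)"
    unfolding S_S_def using assms by (intro sum.cong) (auto simp: algebra_simps)
  also have "\<dots> = S_S n c j + real (n - 1) * \<omega> j + ((\<Sum>k<n. \<omega> k) - \<omega> j)"
    using assms(2) by (simp add: S_S_def sum.distrib sum_diff1)
  finally show ?thesis using assms(2) by (simp add: algebra_simps)
qed

lemma T_G_add_potential:
  assumes "\<forall>i<n. \<forall>k<n. i \<noteq> k \<longrightarrow> d i k - c i k = \<omega> i + \<omega> k" and "2 \<le> n"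
  shows "T_G n d = T_G n c + 2 * (\<Sum>k<n. \<omega> k)"
proof -
  let ?\<Omega> = "\<Sum>k<n. \<omega> k"
  have "(\<Sum>j<n. S_S n d j) = (\<Sum>j<n. S_S n c j + (real n - 2) * \<omega> j + ?\<Omega>)"
    using S_S_add_potential[OF assms(1)] by simp
  also have "\<dots> = (\<Sum>j<n. S_S n c j) + (real n - 2) * ?\<Omega> + real n * ?\<Omega>"
    by (simp add: sum.distrib sum_distrib_left)
  also have "\<dots> = (\<Sum>j<n. S_S n c j) + (real n - 1) * (2 * ?\<Omega>)"
    by (simp add: algebra_simps)
  finally have "(\<Sum>j<n. S_S n d j) = (\<Sum>j<n. S_S n c j) + (real n - 1) * (2 * ?\<Omega>)" .
  moreover have "real n - 1 \<noteq> 0" using assms(2) by simp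
  ultimately show ?thesis unfolding T_G_def by (simp add: field_simps)
qed

lemma cyclic_part_exists:
  assumes "3 \<le> n" and sym: "\<forall>i j. d i j = d j i"
  shows "\<exists>c. cyclic_part n d c"
proof -
  \<comment> \<open>If d(i,k) = c(i,k) + \<omega>(i) + \<omega>(k) with vanishing row sums of c, then row j of d sums
    to (n - 2) \<omega>(j) + \<Sigma>\<omega> and T(G) = 2 \<Sigma>\<omega>; solving for \<omega>(j) gives:\<close>
  define \<omega> where "\<omega> j = (S_S n d j - T_G n d / 2) / (real n - 2)" for j
  define c where "c i j = (if i < n \<and> j < n \<and> i \<noteq> j then d i j - \<omega> i - \<omega> j else 0)" for i j
  have n: "real n - 2 > 0" "real n - 1 > 0" using assms(1) by auto
  have pot: "\<forall>i<n. \<forall>k<n. i \<noteq> k \<longrightarrow> d i k - c i k = \<omega> i + \<omega> k"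
    by (simp add: c_def)
  have "(\<Sum>j<n. S_S n d j) = (real n - 1) * T_G n d"
    unfolding T_G_def using n by simp
  then have "(\<Sum>k<n. \<omega> k) = ((real n - 1) * T_G n d - real n * (T_G n d / 2)) / (real n - 2)"
    unfolding \<omega>_def by (simp add: sum_divide_distrib[symmetric] sum_subtractf)
  also have "\<dots> = T_G n d / 2" using n by (simp add: field_simps)
  finally have \<Omega>: "(\<Sum>k<n. \<omega> k) = T_G n d / 2" .
  have "\<forall>j<n. S_S n c j = 0"
  proof (intro allI impI)
    fix j assume "j < n"
    have "(real n - 2) * \<omega> j = S_S n d j - T_G n d / 2" using n by (simp add: \<omega>_def)
    then show "S_S n c j = 0" using S_S_add_potential[OF pot \<open>j < n\<close>] \<Omega> by linarith
  qed
  moreover have rep: "graph_rep n c" unfolding graph_rep_def c_def using sym by auto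
  moreover have "(\<lambda>i j. d i j - c i j) \<in> cut_space n"
    unfolding cut_space_def mem_Collect_eq using pot by (intro exI[of _ \<omega>])
  ultimately show ?thesis
    unfolding cyclic_part_def using orthogonal_cut_space_iff[OF rep] by blast
qed

lemma cyclic_part_unique:
  assumes c: "cyclic_part n d c" and c': "cyclic_part n d c'"
  shows "c = c'"
proof -
  define e where "e i j = c i j - c' i j" for i j
  obtain \<omega> \<omega>' where
    \<omega>: "\<forall>i<n. \<forall>j<n. i \<noteq> j \<longrightarrow> d i j - c i j = \<omega> i + \<omega> j" and
    \<omega>': "\<forall>i<n. \<forall>j<n. i \<noteq> j \<longrightarrow> d i j - c' i j = \<omega>' i + \<omega>' j"
    using c c' unfolding cyclic_part_def cut_space_def by auto
  have "\<forall>i<n. \<forall>j<n. i \<noteq> j \<longrightarrow> e i j = (\<omega>' i - \<omega> i) + (\<omega>' j - \<omega> j)"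
  proof (intro allI impI)
    fix i j assume "i < n" "j < n" "i \<noteq> j"
    then show "e i j = (\<omega>' i - \<omega> i) + (\<omega>' j - \<omega> j)"
      using \<omega> \<omega>' unfolding e_def by (simp add: algebra_simps)
  qed
  then have "e \<in> cut_space n"
    unfolding cut_space_def mem_Collect_eq by (intro exI[of _ "\<lambda>k. \<omega>' k - \<omega> k"])
  then have "ginner n c e = 0" "ginner n c' e = 0"
    using c c' unfolding cyclic_part_def by blast+
  moreover have "ginner n e e = ginner n c e - ginner n c' e"
    unfolding ginner_def e_def by (simp add: left_diff_distrib sum_subtractf)
  ultimately have e0: "e i j = 0" if "i < j" "j < n" for i j
    using ginner_self_eq_0D that by simp
  have rep: "graph_rep n c" "graph_rep n c'" using c c' by (simp_all add: cyclic_part_def)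
  show "c = c'"
  proof (intro ext)
    fix i j
    consider "n \<le> i \<or> n \<le> j \<or> i = j" | "i < j" "j < n" | "j < i" "i < n" by linarith
    then show "c i j = c' i j"
    proof cases
      case 1
      then have "c i j = 0" "c' i j = 0" using rep unfolding graph_rep_def by blast+
      then show ?thesis by simp
    next
      case 2 then show ?thesis using e0 by (simp add: e_def)
    next
      case 3
      then have "c j i = c' j i" using e0 by (simp add: e_def)
      moreover have "c i j = c j i" "c' i j = c' j i" using rep unfolding graph_rep_def by blast+
      ultimately show ?thesis by simp
    qed
  qed
qed

lemma cyclic_part_G_cyclic:
  assumes "3 \<le> n" and "\<forall>i j. d i j = d j i"
  shows "cyclic_part n d (G_cyclic n d)"
proof -
  obtain c where c: "cyclic_part n d c" using cyclic_part_exists[OF assms] by blast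
  have "G_cyclic n d = (THE c. cyclic_part n d c)" unfolding G_cyclic_def cyclic_part_def ..
  also have "\<dots> = c"
    by (rule the_equality[where P = "cyclic_part n d", OF c]) (rule cyclic_part_unique[OF _ c])
  finally show ?thesis using c by (simp only:)
qed

lemma sum_take_sorted_le:
  fixes xs :: "'a :: {linorder, ordered_comm_monoid_add} list"
  assumes "sorted xs" and J: "J \<subseteq> {..<length xs}" and "card J = k"
  shows "sum_list (take k xs) \<le> (\<Sum>j\<in>J. xs ! j)"
proof -
  let ?js = "sorted_list_of_set J"
  have "finite J" using J finite_subset by blast
  then have js: "set ?js = J" "distinct ?js" "length ?js = k" "sorted_wrt (<) ?js"
    using assms(3) by auto
  have "k \<le> length xs" using J assms(3) by (metis card_lessThan card_mono finite_lessThan)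
  then have "sum_list (take k xs) = (\<Sum>i<k. xs ! i)"
    by (simp add: sum_list_sum_nth atLeast0LessThan)
  also have "\<dots> \<le> (\<Sum>i<k. xs ! (?js ! i))"
  proof (rule sum_mono)
    fix i assume "i \<in> {..<k}"
    then have "i \<le> ?js ! i" "?js ! i \<in> J" using js sorted_wrt_less_idx nth_mem by auto
    then show "xs ! i \<le> xs ! (?js ! i)" using J assms(1) by (auto intro: sorted_nth_mono)
  qed
  also have "\<dots> = sum_list (map ((!) xs) ?js)"
    using js by (simp add: sum_list_sum_nth atLeast0LessThan)
  also have "\<dots> = (\<Sum>j\<in>J. xs ! j)"
    using sum.distinct_set_conv_list[OF js(2), of "(!) xs"] js(1) by simp
  finally show ?thesis .
qed

lemma sum_take_sort_le:
  fixes xs :: "'a :: {linorder, ordered_comm_monoid_add} list"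
  assumes I: "I \<subseteq> {..<length xs}" and "card I = k"
  shows "sum_list (take k (sort xs)) \<le> (\<Sum>i\<in>I. xs ! i)"
proof -
  obtain f where f: "bij_betw f {..<length xs} {..<length (sort xs)}"
    "\<forall>i<length xs. xs ! i = sort xs ! f i"
    using permutation_Ex_bij[of xs "sort xs"] by auto
  have inj: "inj_on f I" using f(1) I bij_betw_imp_inj_on inj_on_subset by blast
  have "(\<Sum>i\<in>I. xs ! i) = (\<Sum>i\<in>I. sort xs ! f i)" using f(2) I by (auto intro: sum.cong)
  also have "\<dots> = (\<Sum>j\<in>f ` I. sort xs ! j)" using inj by (simp add: sum.reindex)
  finally have "(\<Sum>i\<in>I. xs ! i) = (\<Sum>j\<in>f ` I. sort xs ! j)" .
  moreover have "f ` I \<subseteq> {..<length (sort xs)}" using f(1) I bij_betw_imp_surj_on by blast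
  moreover have "card (f ` I) = k" using inj assms(2) by (simp add: card_image)
  ultimately show ?thesis using sum_take_sorted_le[OF sorted_sort] by simp
qed

lemma sum_take_sort_map_le:
  fixes f :: "'b \<Rightarrow> 'a :: {linorder, ordered_comm_monoid_add}"
  assumes "distinct xs" and E: "E \<subseteq> set xs" and "card E = k"
  shows "sum_list (take k (sort (map f xs))) \<le> sum f E"
proof -
  define J where "J = {j. j < length xs \<and> xs ! j \<in> E}"
  have "bij_betw (nth xs) J E"
  proof (rule bij_betw_imageI)
    show "inj_on (nth xs) J" using assms(1) by (simp add: J_def inj_on_nth)
    show "nth xs ` J = E" using E by (force simp: J_def in_set_conv_nth image_def)
  qed
  then have "sum f E = (\<Sum>j\<in>J. map f xs ! j)" "card J = k"
    using assms(3) by (auto simp: sum.reindex_bij_betw[symmetric] bij_betw_same_card J_def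
        intro: sum.cong)
  moreover have "J \<subseteq> {..<length (map f xs)}" by (auto simp: J_def)
  ultimately show ?thesis using sum_take_sort_le by metis
qed

lemma set_edges: "set (edges n) = {(i, j). i < j \<and> j < n}"
  unfolding edges_def by (auto simp: image_iff)

lemma distinct_edges: "distinct (edges n)"
proof -
  define row where "row i = map (Pair i) [Suc i..<n]" for i
  have fst_row: "fst ` set (row i) = {i}" if "Suc i < n" for i
    using that by (auto simp: row_def image_iff)
  have "inj_on row {0..<n}"
  proof (rule inj_onI)
    fix i j assume "i \<in> {0..<n}" "j \<in> {0..<n}" "row i = row j"
    then show "i = j"
      using fst_row[of i] fst_row[of j]
      by (cases "Suc i < n"; cases "Suc j < n") (auto simp: row_def)
  qed
  then show ?thesis unfolding edges_def row_def[symmetric]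
    by (intro distinct_concat) (auto simp: distinct_map row_def inj_on_def)
qed

lemma Suc_mod_neq:
  assumes "2 \<le> n" and "i < n"
  shows "Suc i mod n \<noteq> i"
  using assms by (simp add: mod_Suc)

lemma Suc_Suc_mod_neq:
  assumes "3 \<le> n" and "i < n"
  shows "Suc (Suc i) mod n \<noteq> i"
  using assms by (auto simp: mod_Suc)

lemma sum_lessThan_Suc_mod: "(\<Sum>i<n. g (Suc i mod n)) = (\<Sum>i<n. g i :: 'a :: comm_monoid_add)"
proof (cases n)
  case (Suc m)
  have "(\<Sum>i<Suc m. g (Suc i mod Suc m)) = (\<Sum>i<m. g (Suc i mod Suc m)) + g 0"
    by simp
  also have "(\<Sum>i<m. g (Suc i mod Suc m)) = (\<Sum>i<m. g (Suc i))"
    by (intro sum.cong) auto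
  also have "(\<Sum>i<m. g (Suc i)) + g 0 = (\<Sum>i<Suc m. g i)"
    by (simp only: sum.lessThan_Suc_shift add.commute)
  finally show ?thesis using Suc by simp
qed simp

lemma permutes_apply_Suc_mod_neq:
  assumes "2 \<le> n" and p: "p permutes {..<n}" and "i < n"
  shows "p i \<noteq> p (Suc i mod n)"
  using Suc_mod_neq[OF assms(1,3)] injD[OF permutes_inj[OF p]] by metis

lemma circuit_length_add_potential:
  assumes pot: "\<forall>i<n. \<forall>k<n. i \<noteq> k \<longrightarrow> d i k - c i k = \<omega> i + \<omega> k"
    and "2 \<le> n" and p: "p permutes {..<n}"
  shows "circuit_length n d p = circuit_length n c p + 2 * (\<Sum>k<n. \<omega> k)"
proof -
  have step: "d (p i) (p (Suc i mod n)) = c (p i) (p (Suc i mod n)) + (\<omega> (p i) + \<omega> (p (Suc i mod n)))"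
    if "i < n" for i
  proof -
    have "p i \<noteq> p (Suc i mod n)" using permutes_apply_Suc_mod_neq[OF \<open>2 \<le> n\<close> p that] .
    moreover have "p i < n" "p (Suc i mod n) < n"
      using that \<open>2 \<le> n\<close> permutes_in_image[OF p] by auto
    ultimately have "d (p i) (p (Suc i mod n)) - c (p i) (p (Suc i mod n)) = \<omega> (p i) + \<omega> (p (Suc i mod n))"
      using pot by blast
    then show ?thesis by simp
  qed
  have "circuit_length n d p
      = circuit_length n c p + ((\<Sum>i<n. \<omega> (p i)) + (\<Sum>i<n. \<omega> (p (Suc i mod n))))"
    unfolding circuit_length_def by (simp add: step sum.distrib)
  also have "(\<Sum>i<n. \<omega> (p (Suc i mod n))) = (\<Sum>i<n. \<omega> (p i))"
    by (rule sum_lessThan_Suc_mod)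
  also have "(\<Sum>i<n. \<omega> (p i)) = (\<Sum>k<n. \<omega> k)"
    using sum.permute[OF p, of \<omega>] by (simp add: comp_def)
  finally show ?thesis by simp
qed

definition circuit_edge :: "nat \<Rightarrow> (nat \<Rightarrow> nat) \<Rightarrow> nat \<Rightarrow> nat \<times> nat" where
  "circuit_edge n p i = (min (p i) (p (Suc i mod n)), max (p i) (p (Suc i mod n)))"

lemma circuit_edge_in_edges:
  assumes "2 \<le> n" and p: "p permutes {..<n}" and "i < n"
  shows "circuit_edge n p i \<in> set (edges n)"
proof -
  have "p i \<noteq> p (Suc i mod n)" using permutes_apply_Suc_mod_neq[OF assms] .
  moreover have "p i < n" "p (Suc i mod n) < n"
    using assms permutes_in_image[OF p] by auto
  ultimately show ?thesis by (auto simp: circuit_edge_def set_edges min_def max_def)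
qed

lemma min_max_eq_iff:
  fixes a b c d :: "'a :: linorder"
  shows "(min a b, max a b) = (min c d, max c d) \<longleftrightarrow> (a = c \<and> b = d) \<or> (a = d \<and> b = c)"
  by (auto simp: min_def max_def)

lemma inj_on_circuit_edge:
  assumes "3 \<le> n" and p: "p permutes {..<n}"
  shows "inj_on (circuit_edge n p) {..<n}"
proof (rule inj_onI)
  fix i j assume i: "i \<in> {..<n}" and j: "j \<in> {..<n}" and e: "circuit_edge n p i = circuit_edge n p j"
  from e have "(p i = p j \<and> p (Suc i mod n) = p (Suc j mod n)) \<or>
             (p i = p (Suc j mod n) \<and> p (Suc i mod n) = p j)"
    unfolding circuit_edge_def min_max_eq_iff by simp
  then have "i = j \<or> (i = Suc j mod n \<and> Suc i mod n = j)"
    using injD[OF permutes_inj[OF p]] by blast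
  moreover have "Suc (Suc i mod n) mod n \<noteq> i"
    using Suc_Suc_mod_neq[OF assms(1)] i by (simp add: mod_Suc_eq)
  ultimately show "i = j" by force
qed

lemma circuit_length_eq_sum_circuit_edges:
  assumes "3 \<le> n" and p: "p permutes {..<n}" and sym: "\<forall>a b. c a b = c b a"
  shows "circuit_length n c p = (\<Sum>e\<in>circuit_edge n p ` {..<n}. case_prod c e)"
proof -
  have "case_prod c (circuit_edge n p i) = c (p i) (p (Suc i mod n))" for i
    using sym by (cases "p i \<le> p (Suc i mod n)") (auto simp: circuit_edge_def min_def max_def)
  then show ?thesis
    unfolding circuit_length_def using inj_on_circuit_edge[OF assms(1) p] by (simp add: sum.reindex)
qed

lemma A_small_le_circuit_length:
  assumes "3 \<le> n" and "graph_rep n c" and p: "p permutes {..<n}"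
  shows "A_small n c \<le> circuit_length n c p"
proof -
  let ?E = "circuit_edge n p ` {..<n}"
  have "?E \<subseteq> set (edges n)" using circuit_edge_in_edges[OF _ p] assms(1) by auto
  moreover have "card ?E = n" using inj_on_circuit_edge[OF assms(1) p] by (simp add: card_image)
  ultimately have "A_small n c \<le> (\<Sum>e\<in>?E. case_prod c e)"
    unfolding A_small_def using sum_take_sort_map_le[OF distinct_edges] by blast
  also have "\<dots> = circuit_length n c p"
    using circuit_length_eq_sum_circuit_edges[OF assms(1) p] assms(2) by (simp add: graph_rep_def)
  finally show ?thesis .
qed

lemma sum_permutations_apply_pair_eq_0:
  fixes c :: "'a \<Rightarrow> 'a \<Rightarrow> real"
  assumes "finite S" and "a \<in> S" "b \<in> S" "a \<noteq> b"
    and rows: "\<forall>x\<in>S. (\<Sum>y\<in>S - {x}. c x y) = 0"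
  shows "(\<Sum>p\<in>{p. p permutes S}. c (p a) (p b)) = 0"
proof -
  define F where "F b' = (\<Sum>p\<in>{p. p permutes S}. c (p a) (p b'))" for b'
  \<comment> \<open>Precomposing with the transposition of b and b' shows that F is constant on S - {a};
    summed over S - {a}, it becomes a sum of row sums.\<close>
  have F_eq: "F b' = F b" if "b' \<in> S - {a}" for b'
  proof -
    have "transpose b b' a = a" using \<open>a \<noteq> b\<close> that by (intro transpose_apply_other) auto
    have "transpose b b' permutes S" using \<open>b \<in> S\<close> that by (intro permutes_swap_id) auto
    then have "F b = (\<Sum>p\<in>{p. p permutes S}. c ((p \<circ> transpose b b') a) ((p \<circ> transpose b b') b))"
      unfolding F_def by (rule sum_permutations_compose_right)
    also have "\<dots> = F b'" unfolding F_def using \<open>transpose b b' a = a\<close> by simp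
    finally show ?thesis by simp
  qed
  have row_p: "(\<Sum>b'\<in>S - {a}. c (p a) (p b')) = 0" if p: "p permutes S" for p
  proof -
    have "(\<Sum>b'\<in>S - {a}. c (p a) (p b')) = (\<Sum>y\<in>p ` (S - {a}). c (p a) y)"
      using permutes_inj[OF p] by (simp add: sum.reindex inj_on_def)
    also have "p ` (S - {a}) = S - {p a}"
      using image_set_diff[OF permutes_inj[OF p]] permutes_image[OF p] by simp
    finally show ?thesis using rows permutes_in_image[OF p] \<open>a \<in> S\<close> by simp
  qed
  have "real (card (S - {a})) * F b = (\<Sum>b'\<in>S - {a}. F b')" using F_eq by simp
  also have "\<dots> = (\<Sum>p\<in>{p. p permutes S}. \<Sum>b'\<in>S - {a}. c (p a) (p b'))"
    unfolding F_def by (rule sum.swap)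
  also have "\<dots> = 0" using row_p by simp
  finally have "real (card (S - {a})) * F b = 0" .
  moreover have "S - {a} \<noteq> {}" using assms(3,4) by auto
  then have "card (S - {a}) \<noteq> 0" using assms(1) by simp
  ultimately show ?thesis unfolding F_def by simp
qed

lemma sum_circuit_length_eq_0:
  assumes "2 \<le> n" and rows: "\<forall>j<n. S_S n c j = 0"
  shows "(\<Sum>p\<in>hamiltonian_circuits n. circuit_length n c p) = 0"
proof -
  have "(\<Sum>p\<in>hamiltonian_circuits n. circuit_length n c p)
      = (\<Sum>i<n. \<Sum>p\<in>{p. p permutes {..<n}}. c (p i) (p (Suc i mod n)))"
    unfolding circuit_length_def hamiltonian_circuits_def by (rule sum.swap)
  also have "\<dots> = 0"
  proof (rule sum.neutral, rule ballI)
    fix i assume "i \<in> {..<n}"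
    moreover have "Suc i mod n \<noteq> i" "Suc i mod n < n"
      using Suc_mod_neq[OF assms(1)] assms(1) \<open>i \<in> {..<n}\<close> by auto
    moreover have "\<forall>x\<in>{..<n}. (\<Sum>y\<in>{..<n} - {x}. c x y) = 0" using rows by (simp add: S_S_def)
    ultimately show "(\<Sum>p\<in>{p. p permutes {..<n}}. c (p i) (p (Suc i mod n))) = 0"
      by (intro sum_permutations_apply_pair_eq_0) auto
  qed
  finally show ?thesis .
qed

lemma ex_circuit_length_nonpos:
  assumes "2 \<le> n" and "\<forall>j<n. S_S n c j = 0"
  obtains p where "p \<in> hamiltonian_circuits n" and "circuit_length n c p \<le> 0"
proof (rule ccontr)
  assume "\<not> thesis"
  then have "\<forall>p\<in>hamiltonian_circuits n. 0 < circuit_length n c p" using that by force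
  moreover have "finite (hamiltonian_circuits n)" "id \<in> hamiltonian_circuits n"
    by (simp_all add: hamiltonian_circuits_def finite_permutations permutes_id)
  ultimately have "0 < (\<Sum>p\<in>hamiltonian_circuits n. circuit_length n c p)"
    by (intro sum_pos) auto
  then show False using sum_circuit_length_eq_0[OF assms] by simp
qed

theorem corollary7:
  fixes n :: nat and d :: "nat \<Rightarrow> nat \<Rightarrow> real"
  assumes "n \<ge> 4"
    and "\<forall>i j. d i j = d j i"
  shows "(\<forall>p\<in>hamiltonian_circuits n.
            circuit_length n d p \<ge> T_G n d + A_small n (G_cyclic n d))
       \<and> Min (circuit_length n d ` hamiltonian_circuits n) \<le> T_G n d"
proof -
  let ?c = "G_cyclic n d"
  have n: "3 \<le> n" "2 \<le> n" using assms(1) by auto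
  have c: "cyclic_part n d ?c" by (rule cyclic_part_G_cyclic[OF n(1) assms(2)])
  then have rep: "graph_rep n ?c" and rows: "\<forall>j<n. S_S n ?c j = 0"
    using orthogonal_cut_space_iff by (auto simp: cyclic_part_def)
  from c obtain \<omega> where pot: "\<forall>i<n. \<forall>k<n. i \<noteq> k \<longrightarrow> d i k - ?c i k = \<omega> i + \<omega> k"
    unfolding cyclic_part_def cut_space_def by auto
  have T: "T_G n d = 2 * (\<Sum>k<n. \<omega> k)"
    using T_G_add_potential[OF pot n(2)] rows by (simp add: T_G_def)
  have len: "circuit_length n d p = circuit_length n ?c p + T_G n d"
    if "p \<in> hamiltonian_circuits n" for p
    using circuit_length_add_potential[OF pot n(2)] that T by (simp add: hamiltonian_circuits_def)
  obtain p\<^sub>0 where p\<^sub>0: "p\<^sub>0 \<in> hamiltonian_circuits n" "circuit_length n ?c p\<^sub>0 \<le> 0"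
    using ex_circuit_length_nonpos[OF n(2) rows] .
  have "Min (circuit_length n d ` hamiltonian_circuits n) \<le> circuit_length n d p\<^sub>0"
    using p\<^sub>0(1) by (simp add: hamiltonian_circuits_def finite_permutations)
  also have "\<dots> \<le> T_G n d" using len[OF p\<^sub>0(1)] p\<^sub>0(2) by simp
  finally show ?thesis
    using len A_small_le_circuit_length[OF n(1) rep] by (auto simp: hamiltonian_circuits_def)
qed

end
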